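(* Let $r$ and $m$ be positive integers. Then there exist polynomials $F$ and $G$, independent of $n$, of degrees $m$ and $r-1$ respectively, such that for every positive integer $n$, \[ \sum_{1\le i_1\le i_2\le\cdots\le i_{2r}\le n}(-1)^{i_1}\, i_1^{2m}=(-1)^n F\big(n(n+2r)\big)+G\big(n(n+2r)\big). \]
   Context: The left-hand side is the $2r$-fold alternating power sum ${\sum}^{2r}(-1)^n n^{2m}$, where ${\sum}^{s}(-1)^n(n+x)^m$ is defined as $\sum_{1\le i_1\le\cdots\le i_s\le n}(-1)^{i_1}(i_1+x)^m$. *)

theory Defs
  imports Main "HOL-Computational_Algebra.Polynomial"
begin

definition alt_multi_sum :: "nat \<Rightarrow> nat \<Rightarrow> int \<Rightarrow> nat \<Rightarrow> int" where
  "alt_multi_sum s m x n =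
     (\<Sum>is \<in> {is :: nat list. length is = s \<and> sorted is \<and> set is \<subseteq> {1..n}}.
        (-1) ^ (hd is) * (int (hd is) + x) ^ m)"

end

theory Submission
  imports Defs
begin

text \<open>
  Viewed as a function T_s(n) of n, the s-fold sum is the s-fold iterated partial sum of
  (-1)^n p(n), here with s = 2r and p(x) = x^(2m). Since
  (-1)^n P(n) - (-1)^(n-1) P(n-1) = (-1)^n (P(n) + P(n-1)), induction on s gives
  T_s(n) = (-1)^n P_s(n) + Q_s(n) with polynomials satisfying
  P_(s+1)(x) + P_(s+1)(x-1) = P_s(x) and Q_(s+1)(x) - Q_(s+1)(x-1) = Q_s(x).
  As p is even and the first equation has unique polynomial solutions, P_s(-x-s) = P_s(x).
  The closed form also vanishes at n = 0, -1, ..., -s; pairing -j with j-s shows, for even s,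
  that Q_s(-x-s) = Q_s(x) at more points than the degree of Q_s, hence identically.
  A polynomial with this symmetry is a polynomial in x(x+s) of half its degree.
  Finally deg P_s = 2m, and deg Q_s = s-2 because Q_2 is the constant E_(2m+1)(1)/2
  (E_k the Euler polynomials), which is nonzero by the sign pattern that a quadratic
  recurrence forces on these numbers.
\<close>

section \<open>Antidifferences of polynomials\<close>

lemma poly_eq_const_if_shift_invariant:
  fixes p :: "'a::field_char_0 poly"
  assumes "\<And>x. poly p x = poly p (x - 1)"
  shows "p = [:poly p 0:]"
proof (rule ccontr)
  assume "p \<noteq> [:poly p 0:]"
  then have "finite {x. poly (p - [:poly p 0:]) x = 0}"
    by (intro poly_roots_finite) simp
  moreover have "poly p (of_nat k) = poly p 0" for k
  proof (induction k)
    case (Suc k)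
    then show ?case
      using assms[of "of_nat k + 1"] by (simp add: add.commute)
  qed simp
  then have "range of_nat \<subseteq> {x. poly (p - [:poly p 0:]) x = 0}"
    by auto
  ultimately show False
    using range_inj_infinite[OF inj_of_nat] finite_subset by blast
qed

lemma degree_eq_if_add_shift:
  fixes p q :: "'a::field_char_0 poly"
  assumes "\<And>x. poly p x + poly p (x - 1) = poly q x"
  shows "degree q = degree p"
proof -
  let ?p' = "p \<circ>\<^sub>p [:-1, 1:]"
  have q: "q = p + ?p'"
    by (rule poly_ext) (simp add: poly_pcompose assms[symmetric])
  have deg: "degree ?p' = degree p"
    by (simp add: degree_pcompose)
  have lead: "coeff ?p' (degree p) = lead_coeff p"
    using lead_coeff_comp[of "[:-1, 1:]" p] by (simp add: degree_pcompose)
  have "degree q \<le> degree p"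
    using degree_add_le[of p "degree p" ?p'] deg q by simp
  moreover have "coeff q (degree p) = 2 * lead_coeff p"
    using deg lead q by simp
  then have "degree p \<le> degree q"
    by (cases "p = 0") (auto intro: le_degree)
  ultimately show ?thesis
    by simp
qed

lemma poly_eq_0_if_add_shift_eq_0:
  fixes p :: "'a::field_char_0 poly"
  assumes "\<And>x. poly p x + poly p (x - 1) = 0"
  shows "p = 0"
proof -
  have "degree p = 0"
    using degree_eq_if_add_shift[of p 0] assms by simp
  then obtain c where "p = [:c:]"
    by (rule degree_eq_zeroE)
  with assms[of 0] show ?thesis
    by simp
qed

lemma degree_less_if_diff_shift:
  fixes p q :: "'a::field_char_0 poly"
  assumes "\<And>x. poly p x - poly p (x - 1) = poly q x" and "q \<noteq> 0"
  shows "degree q < degree p"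
proof (rule degree_lessI)
  let ?p' = "p \<circ>\<^sub>p [:-1, 1:]"
  have q: "q = p - ?p'"
    by (rule poly_ext) (simp add: poly_pcompose assms(1)[symmetric])
  have deg: "degree ?p' = degree p"
    by (simp add: degree_pcompose)
  have lead: "coeff ?p' (degree p) = lead_coeff p"
    using lead_coeff_comp[of "[:-1, 1:]" p] by (simp add: degree_pcompose)
  show "\<forall>k\<ge>degree p. coeff q k = 0"
    using deg lead by (auto simp: q coeff_eq_0 le_less)
qed (use assms(2) in simp)

lemma exists_alt_antidiff:
  fixes q :: "'a::field_char_0 poly"
  shows "\<exists>p. \<forall>x. poly p x + poly p (x - 1) = poly q x"
proof (induction "degree q" arbitrary: q rule: less_induct)
  case less
  show ?case
  proof (cases "degree q = 0")
    case True
    then obtain c where "q = [:c:]"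
      by (rule degree_eq_zeroE)
    then show ?thesis
      by (intro exI[of _ "[:c / 2:]"]) simp
  next
    case False
    define d where "d = degree q"
    define a where "a = lead_coeff q / 2"
    define r where "r = q - smult a (monom 1 d + [:-1, 1:] ^ d)"
    have "degree r < d"
    proof (rule degree_lessI)
      show "\<forall>k\<ge>d. coeff r k = 0"
        by (auto simp: r_def a_def d_def coeff_linear_power le_less coeff_eq_0 degree_linear_power)
    qed (use False d_def in simp)
    then obtain p where "\<forall>x. poly p x + poly p (x - 1) = poly r x"
      using less d_def by blast
    then show ?thesis
      by (intro exI[of _ "p + monom a d"]) (simp add: r_def poly_monom algebra_simps)
  qed
qed

lemma exists_antidiff:
  fixes q :: "'a::field_char_0 poly"
  shows "\<exists>p. degree p \<le> degree q + 1 \<and> (\<forall>x. poly p x - poly p (x - 1) = poly q x)"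
proof (induction "degree q" arbitrary: q rule: less_induct)
  case less
  define d where "d = degree q"
  define a where "a = lead_coeff q / of_nat (d + 1)"
  define r where "r = q - smult a (monom 1 (d + 1) - [:-1, 1:] ^ (d + 1))"
  have poly_r: "poly r x = poly q x - a * (x ^ (d + 1) - (x - 1) ^ (d + 1))" for x
    by (simp add: r_def poly_monom algebra_simps)
  have coeff_r: "coeff r k = 0" if k: "k \<ge> d" for k
  proof -
    consider "k = d" | "k = d + 1" | "k > d + 1"
      using k by linarith
    then show ?thesis
    proof cases
      case 1
      have "coeff ([:-1, 1:] ^ (d + 1) :: 'a poly) d = - of_nat (d + 1)"
        by (subst coeff_linear_poly_power) auto
      then show ?thesis
        using 1 by (simp add: r_def a_def d_def add.commute)
          (metis add.commute of_nat_Suc of_nat_neq_0)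
    qed (auto simp: r_def d_def coeff_linear_power coeff_eq_0 degree_linear_power)
  qed
  obtain p where p: "degree p \<le> d" "\<forall>x. poly p x - poly p (x - 1) = poly r x"
  proof (cases "r = 0")
    case True
    then show ?thesis
      by (intro that[of 0]) auto
  next
    case False
    then have "degree r < degree q"
      using coeff_r by (intro degree_lessI) (auto simp: d_def)
    then obtain p where "degree p \<le> degree r + 1" "\<forall>x. poly p x - poly p (x - 1) = poly r x"
      using less by blast
    with \<open>degree r < degree q\<close> show ?thesis
      by (intro that[of p]) (auto simp: d_def)
  qed
  show ?case
  proof (intro exI conjI allI)
    show "degree (p + monom a (d + 1)) \<le> degree q + 1"
      using p(1) by (auto simp: d_def intro: degree_add_le le_trans[OF degree_monom_le])
    show "poly (p + monom a (d + 1)) x - poly (p + monom a (d + 1)) (x - 1) = poly q x" for x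
      using p(2)[rule_format, of x] by (simp add: poly_r poly_monom algebra_simps)
  qed
qed

definition alt_antidiff :: "'a::field_char_0 poly \<Rightarrow> 'a poly" where
  "alt_antidiff q = (SOME p. \<forall>x. poly p x + poly p (x - 1) = poly q x)"

lemma poly_alt_antidiff:
  "poly (alt_antidiff q) x + poly (alt_antidiff q) (x - 1) = poly q x"
  using someI_ex[OF exists_alt_antidiff[of q]] unfolding alt_antidiff_def by blast

lemma alt_antidiff_unique:
  fixes p q :: "'a::field_char_0 poly"
  assumes "\<And>x. poly p x + poly p (x - 1) = poly q x"
  shows "alt_antidiff q = p"
proof -
  have "alt_antidiff q - p = 0"
    by (rule poly_eq_0_if_add_shift_eq_0) (simp add: poly_alt_antidiff assms algebra_simps)
  then show ?thesis
    by simp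
qed

lemma degree_alt_antidiff: "degree (alt_antidiff q) = degree q"
  by (rule degree_eq_if_add_shift[OF poly_alt_antidiff, symmetric])

text \<open>The antidifference is normalised to vanish at 0, which makes it unique.\<close>
definition antidiff :: "'a::field_char_0 poly \<Rightarrow> 'a poly" where
  "antidiff q = (SOME p. degree p \<le> degree q + 1 \<and> poly p 0 = 0 \<and>
                   (\<forall>x. poly p x - poly p (x - 1) = poly q x))"

lemma
  shows degree_antidiff_le: "degree (antidiff q) \<le> degree q + 1"
    and poly_antidiff_0: "poly (antidiff q) 0 = 0"
    and poly_antidiff: "poly (antidiff q) x - poly (antidiff q) (x - 1) = poly q x"
proof -
  obtain p where p: "degree p \<le> degree q + 1" "\<forall>x. poly p x - poly p (x - 1) = poly q x"
    using exists_antidiff by blast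
  have "degree (p - [:poly p 0:]) \<le> degree q + 1"
    using p(1) degree_diff_le by fastforce
  with p(2) have "\<exists>p. degree p \<le> degree q + 1 \<and> poly p 0 = 0 \<and>
                   (\<forall>x. poly p x - poly p (x - 1) = poly q x)"
    by (intro exI[of _ "p - [:poly p 0:]"]) simp
  from someI_ex[OF this] show
    "degree (antidiff q) \<le> degree q + 1" "poly (antidiff q) 0 = 0"
    "poly (antidiff q) x - poly (antidiff q) (x - 1) = poly q x"
    unfolding antidiff_def by blast+
qed

lemma antidiff_0 [simp]: "antidiff 0 = 0"
proof -
  have "antidiff 0 = [:poly (antidiff 0) 0:]"
    by (rule poly_eq_const_if_shift_invariant) (use poly_antidiff[of 0] in simp)
  then show ?thesis
    using poly_antidiff_0[of 0] by (metis pCons_0_0)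
qed

lemma degree_antidiff:
  assumes "q \<noteq> 0"
  shows "degree (antidiff q) = degree q + 1"
  using degree_less_if_diff_shift[OF poly_antidiff assms] degree_antidiff_le[of q] by simp

section \<open>Polynomials invariant under a reflection\<close>

lemma reflection_invariant_poly_decompose:
  fixes p :: "'a::field_char_0 poly"
  assumes "\<And>x. poly p (- x - c) = poly p x"
  shows "\<exists>F. (\<forall>x. poly p x = poly F (x * (x + c))) \<and> 2 * degree F = degree p"
  using assms
proof (induction "degree p" arbitrary: p rule: less_induct)
  case less
  show ?case
  proof (cases "degree p = 0")
    case True
    then show ?thesis
      by (intro exI[of _ p]) (auto elim: degree_eq_zeroE)
  next
    case False
    define l where "l = lead_coeff p"
    define w :: "'a poly" where "w = [:0, c, 1:]"
    have poly_w: "poly w x = x * (x + c)" for x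
      by (simp add: w_def algebra_simps)
    have "poly (p \<circ>\<^sub>p [:- c, -1:]) x = poly p (- x - c)" for x
      unfolding poly_pcompose by (rule arg_cong[where f = "poly p"]) (simp add: algebra_simps)
    then have "p \<circ>\<^sub>p [:- c, -1:] = p"
      by (intro poly_ext) (simp add: less.prems)
    then have "l * (-1) ^ degree p = l"
      using lead_coeff_comp[of "[:- c, -1:]" p] by (simp add: l_def)
    then have "even (degree p)"
      using False by (auto simp: l_def minus_one_power_iff split: if_splits)
    then obtain k where k: "degree p = 2 * k"
      by blast
    define p1 where "p1 = p - smult l (w ^ k)"
    have deg_wk: "degree (w ^ k) = 2 * k"
      by (simp add: w_def degree_power_eq)
    have "lead_coeff w = 1"
      by (simp add: w_def)
    then have lead_wk: "lead_coeff (w ^ k) = 1"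
      by (simp only: lead_coeff_power power_one)
    have "degree p1 < degree p"
    proof (rule degree_lessI)
      show "\<forall>i\<ge>degree p. coeff p1 i = 0"
        using deg_wk lead_wk k by (auto simp: p1_def l_def le_less coeff_eq_0)
    qed (use False in simp)
    moreover have "poly p1 (- x - c) = poly p1 x" for x
      using less.prems[of x] poly_w[of x] poly_w[of "- x - c"]
      by (simp add: p1_def algebra_simps)
    ultimately obtain F1 where
      F1: "\<forall>x. poly p1 x = poly F1 (x * (x + c))" "2 * degree F1 = degree p1"
      using less.hyps by blast
    define F where "F = F1 + monom l k"
    have "l \<noteq> 0"
      using False by (auto simp: l_def)
    moreover have "degree F1 < k"
      using F1(2) \<open>degree p1 < degree p\<close> k by simp
    ultimately have "degree F = k"
      unfolding F_def by (subst degree_add_eq_right) (simp_all add: degree_monom_eq)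
    moreover have "poly p x = poly F (x * (x + c))" for x
      using F1(1)[rule_format, of x] poly_w[of x] by (simp add: F_def p1_def poly_monom diff_eq_eq)
    ultimately show ?thesis
      using k by auto
  qed
qed

section \<open>Iterated partial sums of alternating polynomial sequences\<close>

primrec iter_psum :: "(nat \<Rightarrow> 'a::comm_monoid_add) \<Rightarrow> nat \<Rightarrow> nat \<Rightarrow> 'a" where
  "iter_psum f 0 = f"
| "iter_psum f (Suc s) = (\<lambda>n. \<Sum>k = 1..n. iter_psum f s k)"

lemma iter_psum_Suc_Suc:
  "iter_psum f (Suc s) (Suc n) = iter_psum f (Suc s) n + iter_psum f s (Suc n)"
  by simp

text \<open>
  osc_part p s and smooth_part p s are the polynomials P_s and Q_s of the proof idea above,
  for an arbitrary polynomial p.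
\<close>
primrec osc_part :: "'a::field_char_0 poly \<Rightarrow> nat \<Rightarrow> 'a poly" where
  "osc_part p 0 = p"
| "osc_part p (Suc s) = alt_antidiff (osc_part p s)"

primrec smooth_part :: "'a::field_char_0 poly \<Rightarrow> nat \<Rightarrow> 'a poly" where
  "smooth_part p 0 = 0"
| "smooth_part p (Suc s) = antidiff (smooth_part p s) - [:poly (osc_part p (Suc s)) 0:]"

lemma poly_osc_part_Suc:
  "poly (osc_part p (Suc s)) x + poly (osc_part p (Suc s)) (x - 1) = poly (osc_part p s) x"
  by (simp add: poly_alt_antidiff)

lemma poly_smooth_part_Suc:
  "poly (smooth_part p (Suc s)) x - poly (smooth_part p (Suc s)) (x - 1) = poly (smooth_part p s) x"
  using poly_antidiff[of "smooth_part p s" x] by simp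

lemma poly_smooth_part_Suc_0:
  "poly (smooth_part p (Suc s)) 0 = - poly (osc_part p (Suc s)) 0"
  using poly_antidiff_0[of "smooth_part p s"] by simp

declare osc_part.simps(2) [simp del] smooth_part.simps(2) [simp del]

lemma iter_psum_alternating_poly:
  fixes p :: "'a::field_char_0 poly"
  shows "iter_psum (\<lambda>k. (-1) ^ k * poly p (of_nat k)) s n =
           (-1) ^ n * poly (osc_part p s) (of_nat n) + poly (smooth_part p s) (of_nat n)"
proof (induction s arbitrary: n)
  case 0
  then show ?case
    by simp
next
  case (Suc s)
  note IH_s = Suc.IH
  let ?P = "osc_part p s" and ?P' = "osc_part p (Suc s)"
  let ?Q = "smooth_part p s" and ?Q' = "smooth_part p (Suc s)"
  show ?case
  proof (induction n)
    case 0
    then show ?case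
      by (simp add: poly_smooth_part_Suc_0)
  next
    case (Suc n)
    have osc: "poly ?P' (of_nat (Suc n)) = poly ?P (of_nat (Suc n)) - poly ?P' (of_nat n)"
      using poly_osc_part_Suc[of p s "of_nat (Suc n)"] by (simp add: eq_diff_eq)
    have smooth: "poly ?Q' (of_nat (Suc n)) = poly ?Q' (of_nat n) + poly ?Q (of_nat (Suc n))"
      using poly_smooth_part_Suc[of p s "of_nat (Suc n)"] by (simp add: diff_eq_eq)
    have "iter_psum (\<lambda>k. (-1) ^ k * poly p (of_nat k)) (Suc s) (Suc n) =
          ((-1) ^ n * poly ?P' (of_nat n) + poly ?Q' (of_nat n)) +
          ((-1) ^ Suc n * poly ?P (of_nat (Suc n)) + poly ?Q (of_nat (Suc n)))"
      by (simp only: iter_psum_Suc_Suc Suc.IH IH_s)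
    also have "\<dots> = (-1) ^ Suc n * poly ?P' (of_nat (Suc n)) + poly ?Q' (of_nat (Suc n))"
      by (simp only: osc smooth) (simp add: algebra_simps)
    finally show ?case .
  qed
qed

text \<open>
  The closed form, read at \<open>n = -j\<close>, extends the vanishing of the partial sums at \<open>n = 0\<close>.
\<close>
lemma osc_smooth_at_neg_eq_0:
  fixes p :: "'a::field_char_0 poly"
  assumes "poly p 0 = 0" and "j \<le> s"
  shows "(-1) ^ j * poly (osc_part p s) (- of_nat j) + poly (smooth_part p s) (- of_nat j) = 0"
  using assms(2)
proof (induction s arbitrary: j)
  case 0
  then show ?case
    using assms(1) by simp
next
  case (Suc s)
  note IH_s = Suc.IH
  let ?P = "osc_part p s" and ?P' = "osc_part p (Suc s)"
  let ?Q = "smooth_part p s" and ?Q' = "smooth_part p (Suc s)"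
  show ?case
    using Suc.prems
  proof (induction j)
    case 0
    then show ?case
      by (simp add: poly_smooth_part_Suc_0)
  next
    case (Suc j)
    let ?x = "- of_nat j :: 'a"
    have osc: "poly ?P' (?x - 1) = poly ?P ?x - poly ?P' ?x"
      using poly_osc_part_Suc[of p s ?x] by (simp add: eq_diff_eq add.commute)
    have smooth: "poly ?Q' (?x - 1) = poly ?Q' ?x - poly ?Q ?x"
      using poly_smooth_part_Suc[of p s ?x] by (simp add: eq_diff_eq diff_eq_eq add.commute)
    have "- of_nat (Suc j) = ?x - 1"
      by simp
    then have "(-1) ^ Suc j * poly ?P' (- of_nat (Suc j)) + poly ?Q' (- of_nat (Suc j)) =
          ((-1) ^ j * poly ?P' ?x + poly ?Q' ?x) - ((-1) ^ j * poly ?P ?x + poly ?Q ?x)"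
      by (simp only: osc smooth) (simp add: algebra_simps)
    also have "\<dots> = 0"
      using IH_s[of j] Suc.IH Suc.prems by simp
    finally show ?case .
  qed
qed

lemma degree_osc_part [simp]: "degree (osc_part p s) = degree p"
  by (induction s) (simp_all add: osc_part.simps(2) degree_alt_antidiff)

lemma osc_part_reflect:
  fixes p :: "'a::field_char_0 poly"
  assumes "\<And>x. poly p (- x) = poly p x"
  shows "poly (osc_part p s) (- x - of_nat s) = poly (osc_part p s) x"
proof (induction s arbitrary: x)
  case 0
  then show ?case
    using assms by simp
next
  case (Suc s)
  define P where "P = osc_part p (Suc s)"
  define P' where "P' = P \<circ>\<^sub>p [:- of_nat s - 1, -1:]"
  have poly_P': "poly P' y = poly P (- y - of_nat s - 1)" for y
    unfolding P'_def poly_pcompose by (rule arg_cong[where f = "poly P"]) (simp add: algebra_simps)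
  have "alt_antidiff (osc_part p s) = P'"
  proof (rule alt_antidiff_unique)
    fix y
    have "poly P' (y - 1) = poly P (- y - of_nat s)"
      unfolding poly_P' by (rule arg_cong[where f = "poly P"]) simp
    then have "poly P' y + poly P' (y - 1) = poly P (- y - of_nat s) + poly P (- y - of_nat s - 1)"
      by (simp add: poly_P')
    also have "\<dots> = poly (osc_part p s) y"
      using poly_osc_part_Suc[of p s "- y - of_nat s"] Suc.IH[of y] by (simp add: P_def)
    finally show "poly P' y + poly P' (y - 1) = poly (osc_part p s) y" .
  qed
  then show ?case
    using poly_P'[of x] by (simp add: P_def osc_part.simps(2) algebra_simps)
qed

lemma degree_smooth_part_le: "degree (smooth_part p s) \<le> s - 1"
proof (induction s)
  case 0
  then show ?case
    by simp
next
  case (Suc s)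
  have "degree (antidiff (smooth_part p s)) \<le> s"
  proof (cases "smooth_part p s = 0")
    case False
    then have "s \<noteq> 0"
      by (cases s) auto
    then show ?thesis
      using Suc.IH degree_antidiff[OF False] by simp
  qed simp
  then show ?case
    using degree_diff_le_max[of "antidiff (smooth_part p s)" "[:poly (osc_part p (Suc s)) 0:]"]
    by (simp add: smooth_part.simps(2))
qed

lemma degree_smooth_part_add:
  assumes "smooth_part p t \<noteq> 0"
  shows "degree (smooth_part p (t + k)) = degree (smooth_part p t) + k"
proof (induction k)
  case 0
  then show ?case
    by simp
next
  case (Suc k)
  let ?Q = "smooth_part p (t + k)"
  have "?Q \<noteq> 0"
    using assms Suc.IH by (cases k) auto
  then have "degree (antidiff ?Q) = degree (smooth_part p t) + Suc k"
    using Suc.IH degree_antidiff[of ?Q] by simp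
  then have "degree (antidiff ?Q - [:poly (osc_part p (Suc (t + k))) 0:]) =
             degree (smooth_part p t) + Suc k"
    by (subst diff_conv_add_uminus, subst degree_add_eq_left) auto
  then show ?case
    by (simp add: smooth_part.simps(2))
qed

lemma smooth_part_reflect:
  fixes p :: "'a::field_char_0 poly"
  assumes "\<And>x. poly p (- x) = poly p x" and "poly p 0 = 0" and "even s"
  shows "poly (smooth_part p s) (- x - of_nat s) = poly (smooth_part p s) x"
proof -
  let ?P = "osc_part p s"
  define Q where "Q = smooth_part p s"
  define Q' where "Q' = Q \<circ>\<^sub>p [:- of_nat s, -1:]"
  have poly_Q': "poly Q' y = poly Q (- y - of_nat s)" for y
    unfolding Q'_def poly_pcompose by (rule arg_cong[where f = "poly Q"]) (simp add: algebra_simps)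
  define A where "A = (\<lambda>j. - of_nat j :: 'a) ` {0..s}"
  have "Q = Q'"
  proof (rule poly_eqI_degree[of A])
    fix y
    assume "y \<in> A"
    then obtain j where j: "j \<le> s" "y = - of_nat j"
      by (auto simp: A_def)
    have "poly Q (- of_nat j) = - ((-1) ^ j * poly ?P (- of_nat j))"
      using osc_smooth_at_neg_eq_0[OF assms(2) j(1)]
      by (simp add: Q_def eq_neg_iff_add_eq_0 add.commute)
    moreover have "poly Q (- of_nat (s - j)) = - ((-1) ^ (s - j) * poly ?P (- of_nat (s - j)))"
      using osc_smooth_at_neg_eq_0[OF assms(2), of "s - j" s]
      by (simp add: Q_def eq_neg_iff_add_eq_0 add.commute)
    moreover have "poly ?P (- of_nat (s - j)) = poly ?P (- of_nat j)"
      using osc_part_reflect[OF assms(1), of s "- of_nat j"] j(1) by (simp add: of_nat_diff)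
    moreover have "even (s - j) \<longleftrightarrow> even j"
      using assms(3) j(1) by presburger
    then have "(-1) ^ (s - j) = ((-1) ^ j :: 'a)"
      by (simp add: minus_one_power_iff)
    moreover have "poly Q' y = poly Q (- of_nat (s - j))"
      unfolding poly_Q' j(2) using j(1) by (simp add: of_nat_diff)
    ultimately show "poly Q y = poly Q' y"
      using j(2) by simp
  next
    have "card A = s + 1"
      unfolding A_def by (subst card_image) (auto simp: inj_on_def)
    then show "degree Q < card A" "degree Q' < card A"
      using degree_smooth_part_le[of p s] by (simp_all add: Q_def Q'_def degree_pcompose)
  qed
  then show ?thesis
    using poly_Q'[of x] by (simp add: Q_def)
qed

lemma poly_alt_antidiff_0_if_even:
  fixes p :: "'a::field_char_0 poly"
  assumes "\<And>x. poly p (- x) = poly p x"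
  shows "poly (alt_antidiff p) 0 = poly p 0 / 2"
proof -
  have "alt_antidiff p = osc_part p 1"
    by (simp add: osc_part.simps(2))
  then have "poly (alt_antidiff p) (- 1) = poly (alt_antidiff p) 0"
    using osc_part_reflect[OF assms, of 1 0] by simp
  then show ?thesis
    using poly_alt_antidiff[of p 0] by (simp add: mult.commute)
qed

section \<open>The values of Euler polynomials at 1\<close>

text \<open>
  In terms of Euler polynomials, alt_power_poly n = E_n(x + 1)/2 and alt_power_val n = E_n(1)/2.
\<close>
definition alt_power_poly :: "nat \<Rightarrow> real poly" where
  "alt_power_poly n = alt_antidiff (monom 1 n)"

definition alt_power_val :: "nat \<Rightarrow> real" where
  "alt_power_val n = poly (alt_power_poly n) 0"

lemma poly_alt_power_poly: "poly (alt_power_poly n) x + poly (alt_power_poly n) (x - 1) = x ^ n"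
  by (simp add: alt_power_poly_def poly_alt_antidiff poly_monom)

lemma poly_alt_power_poly_add:
  "poly (alt_power_poly n) (x + y) =
     (\<Sum>k\<le>n. of_nat (n choose k) * x ^ k * poly (alt_power_poly (n - k)) y)"
proof -
  define p where "p = alt_power_poly n \<circ>\<^sub>p [:x, 1:]"
  define r where "r = (\<Sum>k\<le>n. smult (of_nat (n choose k) * x ^ k) (alt_power_poly (n - k)))"
  have "alt_antidiff ([:x, 1:] ^ n) = p"
  proof (rule alt_antidiff_unique)
    fix z
    show "poly p z + poly p (z - 1) = poly ([:x, 1:] ^ n) z"
      using poly_alt_power_poly[of n "x + z"] by (simp add: p_def poly_pcompose algebra_simps)
  qed
  moreover have "alt_antidiff ([:x, 1:] ^ n) = r"
  proof (rule alt_antidiff_unique)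
    fix z
    have "poly r z + poly r (z - 1) =
          (\<Sum>k\<le>n. of_nat (n choose k) * x ^ k *
             (poly (alt_power_poly (n - k)) z + poly (alt_power_poly (n - k)) (z - 1)))"
      by (simp add: r_def poly_sum algebra_simps sum.distrib)
    also have "\<dots> = (x + z) ^ n"
      by (simp add: poly_alt_power_poly binomial_ring mult.assoc)
    finally show "poly r z + poly r (z - 1) = poly ([:x, 1:] ^ n) z"
      by (simp add: add.commute)
  qed
  ultimately have "poly p y = poly r y"
    by simp
  then show ?thesis
    by (simp add: p_def r_def poly_pcompose poly_sum add.commute)
qed

lemma alt_antidiff_alt_power_poly:
  "alt_antidiff (alt_power_poly n) = [:1, 1:] * alt_power_poly n - alt_power_poly (Suc n)"
proof (rule alt_antidiff_unique)
  fix z :: real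
  show "poly ([:1, 1:] * alt_power_poly n - alt_power_poly (Suc n)) z +
        poly ([:1, 1:] * alt_power_poly n - alt_power_poly (Suc n)) (z - 1) =
        poly (alt_power_poly n) z"
    using poly_alt_power_poly[of n z] poly_alt_power_poly[of "Suc n" z]
      distrib_left[of z "poly (alt_power_poly n) z" "poly (alt_power_poly n) (z - 1)"]
    by (simp add: algebra_simps)
qed

lemma alt_power_val_convolution:
  "(\<Sum>k\<le>n. of_nat (n choose k) * alt_power_val k * alt_power_val (n - k)) =
     alt_power_val n - alt_power_val (Suc n)"
proof -
  define r where
    "r = (\<Sum>k\<le>n. smult (of_nat (n choose k) * alt_power_val (n - k)) (alt_power_poly k))"
  have "alt_antidiff (alt_power_poly n) = r"
  proof (rule alt_antidiff_unique)
    fix z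
    have "poly r z + poly r (z - 1) =
          (\<Sum>k\<le>n. of_nat (n choose k) * alt_power_val (n - k) *
             (poly (alt_power_poly k) z + poly (alt_power_poly k) (z - 1)))"
      by (simp add: r_def poly_sum algebra_simps sum.distrib)
    also have "\<dots> = poly (alt_power_poly n) z"
      using poly_alt_power_poly_add[of n z 0]
      by (simp add: poly_alt_power_poly alt_power_val_def algebra_simps)
    finally show "poly r z + poly r (z - 1) = poly (alt_power_poly n) z" .
  qed
  then have "poly r 0 = poly ([:1, 1:] * alt_power_poly n - alt_power_poly (Suc n)) 0"
    by (simp add: alt_antidiff_alt_power_poly)
  then show ?thesis
    by (simp add: r_def poly_sum alt_power_val_def algebra_simps)
qed

lemma alt_power_val_0: "alt_power_val 0 = 1 / 2"
proof -
  have "alt_power_poly 0 = [:1 / 2:]"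
    unfolding alt_power_poly_def by (rule alt_antidiff_unique) simp
  then show ?thesis
    by (simp add: alt_power_val_def)
qed

lemma alt_power_val_even:
  assumes "even n" and "n \<noteq> 0"
  shows "alt_power_val n = 0"
  using poly_alt_antidiff_0_if_even[of "monom 1 n :: real poly"] assms
  by (simp add: alt_power_val_def alt_power_poly_def poly_monom power_0_left)

lemma alt_power_val_odd_recurrence:
  assumes "j \<noteq> 0"
  shows "alt_power_val (2 * j + 1) =
           - (\<Sum>i<j. of_nat (2 * j choose (2 * i + 1)) *
                alt_power_val (2 * i + 1) * alt_power_val (2 * (j - 1 - i) + 1))"
proof -
  define f where "f k = of_nat (2 * j choose k) * alt_power_val k * alt_power_val (2 * j - k)" for k
  have "- alt_power_val (2 * j + 1) = (\<Sum>k\<le>2 * j. f k)"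
    using alt_power_val_convolution[of "2 * j"] alt_power_val_even[of "2 * j"] assms
    by (simp add: f_def)
  also have "\<dots> = (\<Sum>k<2 * j. if even k then f k else f k) + f (2 * j)"
    by (simp add: lessThan_Suc_atMost[symmetric])
  also have "\<dots> = (\<Sum>i<j. f (2 * i)) + (\<Sum>i<j. f (2 * i + 1)) + f (2 * j)"
    by (simp only: sum_split_even_odd)
  also have "(\<Sum>i<j. f (2 * i)) = 0"
  proof (rule sum.neutral, intro ballI)
    fix i
    assume "i \<in> {..<j}"
    then have "alt_power_val (2 * i) = 0 \<or> alt_power_val (2 * j - 2 * i) = 0"
      using alt_power_val_even assms by (cases "i = 0") auto
    then show "f (2 * i) = 0"
      by (auto simp: f_def)
  qed
  also have "f (2 * j) = 0"
    using alt_power_val_even[of "2 * j"] assms by (simp add: f_def)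
  also have "f (2 * i + 1) = of_nat (2 * j choose (2 * i + 1)) *
               alt_power_val (2 * i + 1) * alt_power_val (2 * (j - 1 - i) + 1)" if "i < j" for i
  proof -
    have "2 * j - (2 * i + 1) = 2 * (j - 1 - i) + 1"
      using that by simp
    then show ?thesis
      by (simp add: f_def)
  qed
  then have "(\<Sum>i<j. f (2 * i + 1)) = (\<Sum>i<j. of_nat (2 * j choose (2 * i + 1)) *
               alt_power_val (2 * i + 1) * alt_power_val (2 * (j - 1 - i) + 1))"
    by (intro sum.cong) auto
  finally show ?thesis
    by simp
qed

lemma alt_power_val_odd_sign: "(-1) ^ j * alt_power_val (2 * j + 1) > 0"
proof (induction j rule: less_induct)
  case (less j)
  show ?case
  proof (cases "j = 0")
    case True
    then show ?thesis
      using alt_power_val_convolution[of 0] by (simp add: alt_power_val_0)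
  next
    case False
    let ?a = "\<lambda>i. (-1) ^ i * alt_power_val (2 * i + 1)"
    have sign: "(-1) ^ j = - ((-1) ^ i * (-1) ^ (j - 1 - i) :: real)" if "i < j" for i
    proof -
      have "j = Suc (i + (j - 1 - i))"
        using that by simp
      then show ?thesis
        by (metis mult_minus1 power_Suc power_add)
    qed
    have "(-1) ^ j * alt_power_val (2 * j + 1) =
          (\<Sum>i<j. of_nat (2 * j choose (2 * i + 1)) * (?a i * ?a (j - 1 - i)))"
      unfolding alt_power_val_odd_recurrence[OF False] mult_minus_right sum_distrib_left
        sum_negf[symmetric]
      by (intro sum.cong) (auto simp: sign)
    also have "\<dots> > 0"
      using False less by (intro sum_pos) (auto intro!: mult_pos_pos)
    finally show ?thesis .
  qed
qed

lemma smooth_part_monom_2: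
  assumes "even N" and "N \<noteq> 0"
  shows "smooth_part (monom 1 N) 2 = [:alt_power_val (Suc N):]"
proof -
  have osc_1: "osc_part (monom 1 N) 1 = alt_power_poly N"
    by (simp add: osc_part.simps(2) alt_power_poly_def)
  then have "osc_part (monom 1 N) 2 = [:1, 1:] * alt_power_poly N - alt_power_poly (Suc N)"
    by (simp add: numeral_2_eq_2 osc_part.simps(2) alt_antidiff_alt_power_poly)
  moreover have "alt_power_val N = 0"
    using alt_power_val_even assms by blast
  ultimately show ?thesis
    using osc_1 by (simp add: numeral_2_eq_2 smooth_part.simps(2) alt_power_val_def)
qed

lemma degree_smooth_part_monom:
  assumes "even N" and "N \<noteq> 0" and "s \<ge> 2"
  shows "degree (smooth_part (monom 1 N :: real poly) s) = s - 2"
proof -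
  obtain j where "Suc N = 2 * j + 1"
    using assms(1) by auto
  then have "alt_power_val (Suc N) \<noteq> 0"
    using alt_power_val_odd_sign[of j] by auto
  then have "smooth_part (monom 1 N :: real poly) 2 \<noteq> 0"
    "degree (smooth_part (monom 1 N :: real poly) 2) = 0"
    using smooth_part_monom_2[OF assms(1,2)] by simp_all
  moreover obtain k where "s = 2 + k"
    using assms(3) le_Suc_ex by blast
  ultimately show ?thesis
    using degree_smooth_part_add[of "monom 1 N :: real poly" 2 k] by simp
qed

section \<open>Weakly increasing index lists\<close>

definition sorted_lists :: "nat \<Rightarrow> nat \<Rightarrow> nat list set" where
  "sorted_lists s n = {is. length is = s \<and> sorted is \<and> set is \<subseteq> {1..n}}"

lemma finite_sorted_lists: "finite (sorted_lists s n)"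
proof -
  have "sorted_lists s n \<subseteq> {xs. set xs \<subseteq> {1..n} \<and> length xs = s}"
    by (auto simp: sorted_lists_def)
  then show ?thesis
    using finite_lists_length_eq[of "{1..n}" s] finite_subset by blast
qed

lemma sorted_lists_0: "sorted_lists 0 n = {[]}"
  by (auto simp: sorted_lists_def)

lemma sorted_lists_Suc_0: "sorted_lists (Suc s) 0 = {}"
  by (auto simp: sorted_lists_def)

lemma sorted_lists_Suc_Suc:
  "sorted_lists (Suc s) (Suc n) =
     sorted_lists (Suc s) n \<union> (\<lambda>is. is @ [Suc n]) ` sorted_lists s (Suc n)"
proof
  show "sorted_lists (Suc s) (Suc n) \<subseteq>
          sorted_lists (Suc s) n \<union> (\<lambda>is. is @ [Suc n]) ` sorted_lists s (Suc n)"
  proof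
    fix xs
    assume xs: "xs \<in> sorted_lists (Suc s) (Suc n)"
    show "xs \<in> sorted_lists (Suc s) n \<union> (\<lambda>is. is @ [Suc n]) ` sorted_lists s (Suc n)"
    proof (cases "Suc n \<in> set xs")
      case False
      then have "set xs \<subseteq> {1..n}"
        using xs by (auto simp: sorted_lists_def le_Suc_eq)
      then show ?thesis
        using xs by (auto simp: sorted_lists_def)
    next
      case True
      then obtain ys y where xs_eq: "xs = ys @ [y]"
        by (cases xs rule: rev_cases) auto
      have "y = Suc n"
        using xs True by (auto simp: xs_eq sorted_lists_def sorted_append intro: antisym)
      moreover have "ys \<in> sorted_lists s (Suc n)"
        using xs by (auto simp: xs_eq sorted_lists_def sorted_append)
      ultimately show ?thesis
        by (auto simp: xs_eq)
    qed
  qed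
qed (auto simp: sorted_lists_def sorted_append subset_iff)

lemma sum_sorted_lists_Suc_Suc:
  "(\<Sum>is\<in>sorted_lists (Suc s) (Suc n). g is) =
     (\<Sum>is\<in>sorted_lists (Suc s) n. g is) +
     (\<Sum>is\<in>sorted_lists s (Suc n). g (is @ [Suc n]))"
proof -
  have "sorted_lists (Suc s) n \<inter> (\<lambda>is. is @ [Suc n]) ` sorted_lists s (Suc n) = {}"
    by (auto simp: sorted_lists_def)
  moreover have "inj_on (\<lambda>is. is @ [Suc n]) (sorted_lists s (Suc n))"
    by (auto simp: inj_on_def)
  ultimately show ?thesis
    unfolding sorted_lists_Suc_Suc
    by (simp add: sum.union_disjoint finite_sorted_lists sum.reindex)
qed

lemma sum_sorted_lists_hd_eq_iter_psum:
  "(\<Sum>is\<in>sorted_lists (Suc s) n. f (hd is)) = iter_psum f (Suc s) n"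
proof (induction s arbitrary: n)
  case 0
  show ?case
    by (induction n) (simp_all add: sorted_lists_Suc_0 sum_sorted_lists_Suc_Suc sorted_lists_0)
next
  case (Suc s)
  note IH_s = Suc.IH
  show ?case
  proof (induction n)
    case 0
    then show ?case
      by (simp add: sorted_lists_Suc_0)
  next
    case (Suc n)
    have "(\<Sum>is\<in>sorted_lists (Suc (Suc s)) (Suc n). f (hd is)) =
          (\<Sum>is\<in>sorted_lists (Suc (Suc s)) n. f (hd is)) +
          (\<Sum>is\<in>sorted_lists (Suc s) (Suc n). f (hd (is @ [Suc n])))"
      by (rule sum_sorted_lists_Suc_Suc)
    also have "(\<Sum>is\<in>sorted_lists (Suc s) (Suc n). f (hd (is @ [Suc n]))) =
          (\<Sum>is\<in>sorted_lists (Suc s) (Suc n). f (hd is))"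
      by (intro sum.cong) (auto simp: sorted_lists_def hd_append)
    finally show ?case
      by (simp only: Suc.IH IH_s iter_psum_Suc_Suc[of f "Suc s"])
  qed
qed

lemma alt_multi_sum_eq_iter_psum:
  assumes "s \<noteq> 0"
  shows "real_of_int (alt_multi_sum s N x n) =
           iter_psum (\<lambda>k. (-1) ^ k * (real k + real_of_int x) ^ N) s n"
proof -
  obtain t where "s = Suc t"
    using assms not0_implies_Suc by blast
  then show ?thesis
    using sum_sorted_lists_hd_eq_iter_psum[where s = t and n = n
        and f = "\<lambda>k. (-1) ^ k * (real k + real_of_int x) ^ N"]
    by (simp add: alt_multi_sum_def sorted_lists_def)
qed

lemma iter_psum_alternating_power_closed_form:
  assumes "even N" and "N \<noteq> 0" and "even s" and "s \<noteq> 0"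
  shows "\<exists>F G :: real poly. degree F = N div 2 \<and> degree G = s div 2 - 1 \<and>
           (\<forall>n. iter_psum (\<lambda>k. (-1) ^ k * real k ^ N) s n =
                  (-1) ^ n * poly F (real n * (real n + real s)) +
                  poly G (real n * (real n + real s)))"
proof -
  let ?p = "monom 1 N :: real poly"
  have p_even: "poly ?p (- x) = poly ?p x" for x
    using assms(1) by (simp add: poly_monom)
  have p_0: "poly ?p 0 = 0"
    using assms(2) by (simp add: poly_monom)
  obtain F where F: "\<forall>x. poly (osc_part ?p s) x = poly F (x * (x + real s))"
    "2 * degree F = degree (osc_part ?p s)"
    using reflection_invariant_poly_decompose[OF osc_part_reflect[OF p_even, of s]] by blast
  obtain G where G: "\<forall>x. poly (smooth_part ?p s) x = poly G (x * (x + real s))"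
    "2 * degree G = degree (smooth_part ?p s)"
    using reflection_invariant_poly_decompose[OF smooth_part_reflect[OF p_even p_0 assms(3)]]
    by blast
  have "degree F = N div 2"
    using F(2) by (simp add: degree_monom_eq)
  moreover have "degree G = s div 2 - 1"
    using G(2) degree_smooth_part_monom[OF assms(1,2), of s] assms(3,4) by fastforce
  moreover have "iter_psum (\<lambda>k. (-1) ^ k * real k ^ N) s n =
      (-1) ^ n * poly F (real n * (real n + real s)) + poly G (real n * (real n + real s))" for n
    using iter_psum_alternating_poly[of ?p s n] F(1) G(1) by (simp add: poly_monom)
  ultimately show ?thesis
    by blast
qed

theorem mainTheorem6:
  fixes r m :: nat
  assumes "r \<ge> 1" and "m \<ge> 1"
  shows "\<exists>F G :: real poly. degree F = m \<and> degree G = r - 1 \<and>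
           (\<forall>n::nat. n \<ge> 1 \<longrightarrow>
              real_of_int (alt_multi_sum (2 * r) (2 * m) 0 n)
                = (-1) ^ n * poly F (real (n * (n + 2 * r))) + poly G (real (n * (n + 2 * r))))"
proof -
  obtain F G :: "real poly" where "degree F = m" and "degree G = r - 1" and
    closed_form: "\<And>n. iter_psum (\<lambda>k. (-1) ^ k * real k ^ (2 * m)) (2 * r) n =
      (-1) ^ n * poly F (real n * (real n + real (2 * r))) +
      poly G (real n * (real n + real (2 * r)))"
    using iter_psum_alternating_power_closed_form[of "2 * m" "2 * r"] assms by auto
  moreover have "real_of_int (alt_multi_sum (2 * r) (2 * m) 0 n) =
      (-1) ^ n * poly F (real (n * (n + 2 * r))) + poly G (real (n * (n + 2 * r)))" for n
    using alt_multi_sum_eq_iter_psum[of "2 * r" "2 * m" 0 n] closed_form[of n] assms(1) by simp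
  ultimately show ?thesis
    by blast
qed

end
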